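(* For every command $C$, every $c \in \{\mathit{true},\mathit{false}\}$ and every $\omega$-chain $f_0 \le f_1 \le f_2 \le \cdots$ of expectations (ordered pointwise), \[ \mathsf{et}_c[C]\bigl(\sup_{n\in\mathbb{N}} f_n\bigr) = \sup_{n\in\mathbb{N}} \mathsf{et}_c[C](f_n), \] where suprema of expectations are taken pointwise.
   Context: Let $\mathrm{Var}$ be a finite set of integer-valued variables and $\Sigma = \mathrm{Var}\to\mathbb{Z}$ the set of stores. Boolean expressions $\varphi$ over $\mathrm{Var}$ are evaluated on stores; $\sigma\models\varphi$ means $\varphi$ holds in $\sigma$. A distribution expression $d$ assigns to each store $\sigma$ a probability distribution $d(\sigma)$ on $\mathbb{Z}$ (countable support, total mass $1$). Commands are given by the grammar $C,D ::= \mathtt{skip} \mid \mathtt{tick}(r) \mid \mathtt{halt} \mid x :\approx d \mid \mathtt{if}_{[\psi]}(\varphi)\{C\}\{D\} \mid \mathtt{while}_{[\psi]}(\varphi)\{C\} \mid C \,\square\, D \mid C \oplus_p D \mid C;D$, with $r$ a nonnegative rational, $x\in\mathrm{Var}$, $\varphi,\psi$ Boolean expressions ($\psi$ is an assertion), and $p\in[0,1]$. An expectation is a function $f:\Sigma\to[0,\infty]$; $\mathrm{Expect}$ is the set of expectations, ordered pointwise ($f\le g$ iff $f(\sigma)\le g(\sigma)$ for all $\sigma$). Operations are lifted pointwise, $\mathbf{r}$ denotes the constant function $r$, $[\varphi](\sigma)=1$ if $\sigma\models\varphi$ and $0$ otherwise, and for a Boolean $c$, $[c]=1$ if $c=\mathit{true}$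 and $0$ otherwise; the convention $0\cdot\infty=0$ is used. For $c\in\{\mathit{true},\mathit{false}\}$ the transformer $\mathsf{et}_c[\cdot]:\mathrm{Cmd}\to\mathrm{Expect}\to\mathrm{Expect}$ is defined by: $\mathsf{et}_c[\mathtt{skip}](f)=f$; $\mathsf{et}_c[\mathtt{tick}(r)](f)=[c]\cdot\mathbf{r}+f$; $\mathsf{et}_c[\mathtt{halt}](f)=\mathbf{0}$; $\mathsf{et}_c[x:\approx d](f)=\lambda\sigma.\sum_{i\in\mathbb{Z}} d(\sigma)(i)\cdot f(\sigma[x\mapsto i])$; $\mathsf{et}_c[\mathtt{if}_{[\psi]}(\varphi)\{C\}\{D\}](f)=[\psi\wedge\varphi]\cdot\mathsf{et}_c[C](f)+[\psi\wedge\neg\varphi]\cdot\mathsf{et}_c[D](f)$; $\mathsf{et}_c[\mathtt{while}_{[\psi]}(\varphi)\{C\}](f)=\mathrm{lfp}\,F.\ [\psi\wedge\varphi]\cdot\mathsf{et}_c[C](F)+[\psi\wedge\neg\varphi]\cdot f$ (least fixed point w.r.t. the pointwise order); $\mathsf{et}_c[C\,\square\,D](f)=\max(\mathsf{et}_c[C](f),\mathsf{et}_c[D](f))$; $\mathsf{et}_c[C\oplus_p D](f)=\mathbf{p}\cdot\mathsf{et}_c[C](f)+\mathbf{(1-p)}\cdot\mathsf{et}_c[D](f)$; $\mathsf{et}_c[C;D](f)=\mathsf{et}_c[C](\mathsf{et}_c[D](f))$. *)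

theory Defs
  imports "HOL-Probability.Probability_Mass_Function" "HOL-Analysis.Infinite_Sum"
begin

type_synonym 'v store = "'v \<Rightarrow> int"
type_synonym 'v expect = "'v store \<Rightarrow> ennreal"

text \<open>Boolean expressions are predicates on stores; distribution expressions
  map stores to probability mass functions on the integers.\<close>
datatype 'v cmd =
    Skip
  | Tick rat
  | Halt
  | Assign 'v "'v store \<Rightarrow> int pmf"
  | If "'v store \<Rightarrow> bool" "'v store \<Rightarrow> bool" "'v cmd" "'v cmd"
  | While "'v store \<Rightarrow> bool" "'v store \<Rightarrow> bool" "'v cmd"
  | NDet "'v cmd" "'v cmd"
  | PChoice "'v cmd" real "'v cmd"
  | Seq "'v cmd" "'v cmd"

primrec wf_cmd :: "'v cmd \<Rightarrow> bool" where
  "wf_cmd Skip = True"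
| "wf_cmd (Tick r) = (r \<ge> 0)"
| "wf_cmd Halt = True"
| "wf_cmd (Assign x d) = True"
| "wf_cmd (If \<psi> \<phi> C D) = (wf_cmd C \<and> wf_cmd D)"
| "wf_cmd (While \<psi> \<phi> C) = wf_cmd C"
| "wf_cmd (NDet C D) = (wf_cmd C \<and> wf_cmd D)"
| "wf_cmd (PChoice C p D) = (0 \<le> p \<and> p \<le> 1 \<and> wf_cmd C \<and> wf_cmd D)"
| "wf_cmd (Seq C D) = (wf_cmd C \<and> wf_cmd D)"

definition iver :: "bool \<Rightarrow> ennreal" where
  "iver b = (if b then 1 else 0)"

primrec et :: "bool \<Rightarrow> 'v cmd \<Rightarrow> 'v expect \<Rightarrow> 'v expect" where
  "et c Skip f = f"
| "et c (Tick r) f = (\<lambda>\<sigma>. iver c * ennreal (real_of_rat r) + f \<sigma>)"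
| "et c Halt f = (\<lambda>\<sigma>. 0)"
| "et c (Assign x d) f =
     (\<lambda>\<sigma>. \<Sum>\<^sub>\<infinity>i\<in>(UNIV::int set). ennreal (pmf (d \<sigma>) i) * f (\<sigma>(x := i)))"
| "et c (If \<psi> \<phi> C D) f =
     (\<lambda>\<sigma>. iver (\<psi> \<sigma> \<and> \<phi> \<sigma>) * et c C f \<sigma> + iver (\<psi> \<sigma> \<and> \<not> \<phi> \<sigma>) * et c D f \<sigma>)"
| "et c (While \<psi> \<phi> C) f =
     lfp (\<lambda>F \<sigma>. iver (\<psi> \<sigma> \<and> \<phi> \<sigma>) * et c C F \<sigma> + iver (\<psi> \<sigma> \<and> \<not> \<phi> \<sigma>) * f \<sigma>)"
| "et c (NDet C D) f = (\<lambda>\<sigma>. max (et c C f \<sigma>) (et c D f \<sigma>))"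
| "et c (PChoice C p D) f =
     (\<lambda>\<sigma>. ennreal p * et c C f \<sigma> + ennreal (1 - p) * et c D f \<sigma>)"
| "et c (Seq C D) f = et c C (et c D f)"

end

theory Submission
  imports Defs
begin

text \<open>The claim is that \<open>et c C\<close> is sup-continuous, which holds by structural induction
  on \<open>C\<close>: sums, products with constants, \<open>max\<close> and composition preserve continuity; an
  assignment is an infinite sum, i.e.\ a supremum of finite sums; and a loop is the least fixed
  point of a functional continuous jointly in the postexpectation and the fixed-point variable,
  hence continuous in the postexpectation as the supremum of its Kleene iterates.\<close>

lemma sup_continuous_sum_ennreal[order_continuous_intros]:
  fixes g :: "'i \<Rightarrow> 'a::complete_lattice \<Rightarrow> ennreal"
  assumes "\<And>i. i \<in> I \<Longrightarrow> sup_continuous (g i)"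
  shows "sup_continuous (\<lambda>x. \<Sum>i\<in>I. g i x)"
  using assms
proof (induction I rule: infinite_finite_induct)
  case (insert i I)
  then show ?case
    by (simp add: sup_continuous_add_ennreal)
qed (simp_all add: sup_continuous_const)

lemma sup_continuous_infsum_ennreal[order_continuous_intros]:
  fixes g :: "'i \<Rightarrow> 'a::complete_lattice \<Rightarrow> ennreal"
  assumes "\<And>i. i \<in> I \<Longrightarrow> sup_continuous (g i)"
  shows "sup_continuous (\<lambda>x. \<Sum>\<^sub>\<infinity>i\<in>I. g i x)"
proof -
  have "sup_continuous (\<lambda>x. SUP F\<in>{F. finite F \<and> F \<subseteq> I}. \<Sum>i\<in>F. g i x)"
    using assms by (intro sup_continuous_apply_SUP sup_continuous_sum_ennreal) auto
  then show ?thesis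
    by (simp add: nonneg_infsum_complete)
qed

lemma sup_continuous_max_ennreal[order_continuous_intros]:
  fixes f g :: "'a::complete_lattice \<Rightarrow> ennreal"
  assumes "sup_continuous f" and "sup_continuous g"
  shows "sup_continuous (\<lambda>x. max (f x) (g x))"
  using sup_continuous_sup[OF assms] by (simp add: sup_max)

lemma sup_continuous_et: "sup_continuous (et c (C :: 'v cmd))"
proof (induction C)
  case Skip
  show ?case
    by (simp add: sup_continuous_id)
next
  case (Tick r)
  show ?case
    unfolding et.simps
    by (intro sup_continuous_fun sup_continuous_add_ennreal sup_continuous_const
        sup_continuous_apply)
next
  case Halt
  show ?case
    by (simp add: sup_continuous_const)
next
  case (Assign x d)
  show ?case
    unfolding et.simps
    by (intro sup_continuous_fun sup_continuous_infsum_ennreal sup_continuous_mult_left_ennreal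
        sup_continuous_apply)
next
  case (If \<psi> \<phi> C D)
  then show ?case
    unfolding et.simps
    by (intro sup_continuous_fun sup_continuous_add_ennreal sup_continuous_mult_left_ennreal
        sup_continuous_applyD[OF If.IH(1)] sup_continuous_applyD[OF If.IH(2)])
next
  case (While \<psi> \<phi> C)
  show ?case
    unfolding et.simps
  proof (rule sup_continuous_lfp'')
    fix f :: "'v expect"
    show "sup_continuous
        (\<lambda>F \<sigma>. iver (\<psi> \<sigma> \<and> \<phi> \<sigma>) * et c C F \<sigma> + iver (\<psi> \<sigma> \<and> \<not> \<phi> \<sigma>) * f \<sigma>)"
      by (intro sup_continuous_fun sup_continuous_add_ennreal sup_continuous_mult_left_ennreal
          sup_continuous_applyD[OF While.IH] sup_continuous_const)
  next
    fix g :: "'v expect \<Rightarrow> 'v expect"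
    assume "sup_continuous g"
    with While.IH have body: "sup_continuous (\<lambda>f. et c C (g f))"
      by (rule sup_continuous_compose)
    show "sup_continuous
        (\<lambda>f \<sigma>. iver (\<psi> \<sigma> \<and> \<phi> \<sigma>) * et c C (g f) \<sigma> + iver (\<psi> \<sigma> \<and> \<not> \<phi> \<sigma>) * f \<sigma>)"
      by (intro sup_continuous_fun sup_continuous_add_ennreal sup_continuous_mult_left_ennreal
          sup_continuous_applyD[OF body] sup_continuous_apply)
  qed
next
  case (NDet C D)
  then show ?case
    unfolding et.simps
    by (intro sup_continuous_fun sup_continuous_max_ennreal
        sup_continuous_applyD[OF NDet.IH(1)] sup_continuous_applyD[OF NDet.IH(2)])
next
  case (PChoice C p D)
  then show ?case
    unfolding et.simps
    by (intro sup_continuous_fun sup_continuous_add_ennreal sup_continuous_mult_left_ennreal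
        sup_continuous_applyD[OF PChoice.IH(1)] sup_continuous_applyD[OF PChoice.IH(2)])
next
  case (Seq C D)
  then show ?case
    by (simp add: sup_continuous_compose)
qed

theorem mainTheorem1:
  fixes C :: "('v::finite) cmd" and c :: bool and f :: "nat \<Rightarrow> 'v expect"
  assumes "wf_cmd C"
    and "\<And>n. f n \<le> f (Suc n)"
  shows "et c C (SUP n. f n) = (SUP n. et c C (f n))"
proof -
  have "mono f"
    using assms(2) by (simp add: mono_iff_le_Suc)
  then show ?thesis
    by (rule sup_continuousD[OF sup_continuous_et])
qed

end
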